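(* Let $(X,\mathcal{A},\mu)$ be a finite measure space and let $f\in L^1(X)$ be a nonnegative function. Then the set $S_f=\{Sf:\ S\in S\mathcal{D}(L^1(X))\}$ is relatively weakly compact in $L^1(X)$.
   Context: $S\mathcal{D}(L^1(X))$ denotes the set of semi-doubly stochastic operators on $L^1(X)$: positive linear operators $T:L^1(X)\to L^1(X)$ with $\int_X Tf\,d\mu=\int_X f\,d\mu$ for all $f\in L^1(X)$ and $\int_X T^*\chi_E\,d\mu\le\mu(E)$ for every $E\in\mathcal{A}$ with $\mu(E)<\infty$, where $T^*:L^\infty(X)\to L^\infty(X)$ is the Banach adjoint. *)

theory Defs
  imports "HOL-Analysis.Analysis"
begin

text \<open>Elements of L^1(X) are represented by integrable real functions; two
representatives are identified when they agree almost everywhere.  The weak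
topology of L^1 is pulled back to representatives along the quotient map,
i.e. it is the initial topology for the functionals f \<mapsto> \<integral> f g, g \<in> L^\<infinity>.\<close>

definition Linf :: "'a measure \<Rightarrow> ('a \<Rightarrow> real) set" where
  "Linf M = {g \<in> borel_measurable M. \<exists>C. AE x in M. \<bar>g x\<bar> \<le> C}"

definition weak_L1_topology :: "'a measure \<Rightarrow> ('a \<Rightarrow> real) topology" where
  "weak_L1_topology M =
     pullback_topology {f. integrable M f}
       (\<lambda>f. restrict (\<lambda>g. LINT x|M. f x * g x) (Linf M))
       (product_topology (\<lambda>_. euclideanreal) (Linf M))"

definition relatively_compactin :: "'b topology \<Rightarrow> 'b set \<Rightarrow> bool" where
  "relatively_compactin T S \<longleftrightarrow> S \<subseteq> topspace T \<and> compactin T (T closure_of S)"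

definition is_adjoint_image ::
  "'a measure \<Rightarrow> (('a \<Rightarrow> real) \<Rightarrow> ('a \<Rightarrow> real)) \<Rightarrow> ('a \<Rightarrow> real) \<Rightarrow> ('a \<Rightarrow> real) \<Rightarrow> bool" where
  "is_adjoint_image M T g h \<longleftrightarrow> h \<in> Linf M \<and>
     (\<forall>f. integrable M f \<longrightarrow> (LINT x|M. f x * h x) = (LINT x|M. T f x * g x))"

definition semi_doubly_stochastic ::
  "'a measure \<Rightarrow> (('a \<Rightarrow> real) \<Rightarrow> ('a \<Rightarrow> real)) \<Rightarrow> bool" where
  "semi_doubly_stochastic M T \<longleftrightarrow>
     (\<forall>f. integrable M f \<longrightarrow> integrable M (T f)) \<and>
     (\<forall>f g. integrable M f \<longrightarrow> integrable M g \<longrightarrow> (AE x in M. f x = g x) \<longrightarrow>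
            (AE x in M. T f x = T g x)) \<and>
     (\<forall>f g a b. integrable M f \<longrightarrow> integrable M g \<longrightarrow>
            (AE x in M. T (\<lambda>y. a * f y + b * g y) x = a * T f x + b * T g x)) \<and>
     (\<forall>f. integrable M f \<longrightarrow> (AE x in M. 0 \<le> f x) \<longrightarrow> (AE x in M. 0 \<le> T f x)) \<and>
     (\<forall>f. integrable M f \<longrightarrow> (LINT x|M. T f x) = (LINT x|M. f x)) \<and>
     (\<forall>E \<in> sets M. emeasure M E < \<infinity> \<longrightarrow>
        (\<exists>h. is_adjoint_image M T (indicator E) h \<and> (LINT x|M. h x) \<le> measure M E))"

end

theory Submission
  imports Defs
begin

text \<open>Identify u \<in> L^1 with the functional g \<mapsto> \<integral> u g on L^\<infinity>, so that the weak topology is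
the pullback of the product topology on \<real>^(L^\<infinity>). Every S f is nonnegative with \<integral> S f = \<integral> f,
and the adjoint bound \<integral> S^* 1_E \<le> \<mu>(E) gives the uniform estimate
\<integral>_E S f \<le> \<integral>_{f>N} f + N \<mu>(E). Bounded linear functionals satisfying this estimate on
indicators form a closed subset of a Tychonoff box, hence a compact set, and each of them is again
given by an integrable density: the estimate makes E \<mapsto> \<phi>(1_E) countably additive and
absolutely continuous, Radon-Nikodym supplies the density, and step functions are uniformly dense
in L^\<infinity>.\<close>

lemma Linf_const: "(\<lambda>_. c) \<in> Linf M"
  unfolding Linf_def by auto

lemma Linf_indicator: "E \<in> sets M \<Longrightarrow> indicator E \<in> Linf M"
  unfolding Linf_def by (auto intro!: exI[of _ 1] simp: indicator_def)

lemma Linf_linear_combination: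
  assumes "g1 \<in> Linf M" "g2 \<in> Linf M"
  shows "(\<lambda>x. a * g1 x + b * g2 x) \<in> Linf M"
proof -
  obtain C1 C2 where C1: "AE x in M. \<bar>g1 x\<bar> \<le> C1" and C2: "AE x in M. \<bar>g2 x\<bar> \<le> C2"
    using assms by (auto simp: Linf_def)
  have "AE x in M. \<bar>a * g1 x + b * g2 x\<bar> \<le> \<bar>a\<bar> * C1 + \<bar>b\<bar> * C2"
    using C1 C2
  proof eventually_elim
    case (elim x)
    have "\<bar>a * g1 x + b * g2 x\<bar> \<le> \<bar>a\<bar> * \<bar>g1 x\<bar> + \<bar>b\<bar> * \<bar>g2 x\<bar>"
      by (metis abs_mult abs_triangle_ineq)
    also have "\<dots> \<le> \<bar>a\<bar> * C1 + \<bar>b\<bar> * C2"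
      using elim by (intro add_mono mult_left_mono) auto
    finally show ?case .
  qed
  then show ?thesis
    using assms by (auto simp: Linf_def)
qed

lemma Linf_sum:
  assumes "finite K" "\<And>k. k \<in> K \<Longrightarrow> h k \<in> Linf M"
  shows "(\<lambda>x. \<Sum>k\<in>K. c k * h k x) \<in> Linf M"
  using assms
proof (induction K rule: finite_induct)
  case empty
  then show ?case by (simp add: Linf_const)
next
  case (insert k K)
  then show ?case
    using Linf_linear_combination[of "h k" M "\<lambda>x. \<Sum>k\<in>K. c k * h k x" "c k" 1] by simp
qed

lemma integrable_mult_Linf:
  fixes u :: "'a \<Rightarrow> real"
  assumes u: "integrable M u" and g: "g \<in> Linf M"
  shows "integrable M (\<lambda>x. u x * g x)"
proof -
  obtain C where C: "AE x in M. \<bar>g x\<bar> \<le> C" and "g \<in> borel_measurable M"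
    using g by (auto simp: Linf_def)
  show ?thesis
  proof (rule Bochner_Integration.integrable_bound[where f="\<lambda>x. C * u x"])
    show "integrable M (\<lambda>x. C * u x)"
      using u by auto
    show "(\<lambda>x. u x * g x) \<in> borel_measurable M"
      using u \<open>g \<in> borel_measurable M\<close> by measurable
    show "AE x in M. norm (u x * g x) \<le> norm (C * u x)"
      using C by eventually_elim (auto simp: abs_mult mult.commute intro!: mult_right_mono)
  qed
qed

lemma abs_integral_mult_Linf_le:
  fixes u :: "'a \<Rightarrow> real"
  assumes u: "integrable M u" and g: "g \<in> Linf M" and C: "AE x in M. \<bar>g x\<bar> \<le> C"
  shows "\<bar>LINT x|M. u x * g x\<bar> \<le> C * (LINT x|M. \<bar>u x\<bar>)"
proof -
  have "\<bar>LINT x|M. u x * g x\<bar> \<le> (LINT x|M. \<bar>u x * g x\<bar>)"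
    by (rule integral_abs_bound)
  also have "\<dots> \<le> (LINT x|M. C * \<bar>u x\<bar>)"
    using C integrable_abs[OF integrable_mult_Linf[OF u g]] u
    by (intro integral_mono_AE)
      (auto elim!: eventually_mono simp: abs_mult mult.commute intro!: mult_right_mono)
  finally show ?thesis
    by simp
qed

lemma Linf_step_approximation:
  fixes e :: real
  assumes g: "g \<in> Linf M" and e: "0 < e"
  obtains K :: "int set" and A :: "int \<Rightarrow> 'a set"
  where "finite K" "\<And>k. A k \<in> sets M"
    and "AE x in M. \<bar>g x - (\<Sum>k\<in>K. e * of_int k * indicator (A k) x)\<bar> \<le> e"
proof -
  obtain C where C: "AE x in M. \<bar>g x\<bar> \<le> C" and [measurable]: "g \<in> borel_measurable M"
    using g by (auto simp: Linf_def)
  define A where "A k = {x \<in> space M. \<lfloor>g x / e\<rfloor> = k}" for k :: int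
  define K where "K = {-\<lceil>C / e\<rceil>..\<lceil>C / e\<rceil>}"
  have "AE x in M. \<bar>g x - (\<Sum>k\<in>K. e * of_int k * indicator (A k) x)\<bar> \<le> e"
    using C AE_space
  proof eventually_elim
    case (elim x)
    let ?k = "\<lfloor>g x / e\<rfloor>"
    have "- C \<le> g x" "g x \<le> C"
      using elim by auto
    then have "g x / e \<le> C / e" "- C / e \<le> g x / e"
      using e divide_right_mono[of "- C" "g x" e] by (simp_all add: divide_right_mono)
    then have "?k \<le> \<lceil>C / e\<rceil>" "- \<lceil>C / e\<rceil> \<le> ?k"
      by (meson floor_mono floor_le_ceiling order_trans,
          metis floor_mono floor_minus minus_divide_left)
    then have "(\<Sum>k\<in>K. e * of_int k * indicator (A k) x) = e * of_int ?k"
      using elim by (simp add: A_def K_def indicator_def if_distrib[symmetric] sum.delta' cong: if_cong)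
    moreover have "e * of_int ?k \<le> g x"
      using of_int_floor_le[of "g x / e"] e by (metis mult.commute pos_le_divide_eq)
    moreover have "g x < e * of_int ?k + e"
      using real_of_int_floor_add_one_gt[of "g x / e"] e by (simp add: pos_divide_less_eq algebra_simps)
    ultimately show ?case
      by simp
  qed
  then show ?thesis
    using that[of K A] by (simp add: K_def A_def)
qed

locale bounded_Linf_functional =
  fixes M :: "'a measure" and J :: real and \<phi> :: "('a \<Rightarrow> real) \<Rightarrow> real"
  assumes linear: "\<And>g1 g2 a b. g1 \<in> Linf M \<Longrightarrow> g2 \<in> Linf M \<Longrightarrow>
      \<phi> (\<lambda>x. a * g1 x + b * g2 x) = a * \<phi> g1 + b * \<phi> g2"
    and bounded: "\<And>g C. g \<in> Linf M \<Longrightarrow> (AE x in M. \<bar>g x\<bar> \<le> C) \<Longrightarrow> \<bar>\<phi> g\<bar> \<le> C * J"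
begin

lemma sum:
  assumes "finite K" "\<And>k. k \<in> K \<Longrightarrow> h k \<in> Linf M"
  shows "\<phi> (\<lambda>x. \<Sum>k\<in>K. c k * h k x) = (\<Sum>k\<in>K. c k * \<phi> (h k))"
  using assms
proof (induction K rule: finite_induct)
  case empty
  show ?case
    using bounded[OF Linf_const, of 0 0] by simp
next
  case (insert k K)
  then show ?case
    using linear[of "h k" "\<lambda>x. \<Sum>k\<in>K. c k * h k x" "c k" 1] Linf_sum[of K h M c] by simp
qed

lemma eq_0_if_indicator_eq_0:
  assumes ind: "\<And>E. E \<in> sets M \<Longrightarrow> \<phi> (indicator E) = 0" and g: "g \<in> Linf M"
  shows "\<phi> g = 0"
proof -
  have "\<bar>\<phi> g\<bar> \<le> 0 + e" if e: "0 < e" for e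
  proof -
    define d where "d = e / (\<bar>J\<bar> + 1)"
    have d: "0 < d" "d * \<bar>J\<bar> \<le> e"
      using e by (auto simp: d_def field_simps)
    obtain K A where K: "finite K" and A: "\<And>k. A k \<in> sets M"
      and approx: "AE x in M. \<bar>g x - (\<Sum>k\<in>K. d * of_int k * indicator (A k) x)\<bar> \<le> d"
      using Linf_step_approximation[OF g d(1)] by blast
    define s where "s x = (\<Sum>k\<in>K. d * of_int k * indicator (A k) x)" for x
    have s: "s \<in> Linf M"
      unfolding s_def by (rule Linf_sum[OF K]) (simp add: Linf_indicator A)
    have "\<phi> s = 0"
      unfolding s_def using sum[OF K, of "\<lambda>k. indicator (A k)" "\<lambda>k. d * of_int k"]
      by (simp add: Linf_indicator A ind)
    have r: "(\<lambda>x. g x - s x) \<in> Linf M"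
      using Linf_linear_combination[OF g s, of 1 "-1"] by simp
    have "\<phi> g = \<phi> (\<lambda>x. 1 * s x + 1 * (g x - s x))"
      by simp
    also have "\<dots> = \<phi> (\<lambda>x. g x - s x)"
      using linear[OF s r, of 1 1] \<open>\<phi> s = 0\<close> by simp
    finally have "\<bar>\<phi> g\<bar> \<le> d * J"
      using bounded[OF r] approx by (simp add: s_def)
    moreover have "d * J \<le> d * \<bar>J\<bar>"
      using d by (intro mult_left_mono) auto
    ultimately show ?thesis
      using d by linarith
  qed
  then show ?thesis
    using field_le_epsilon[of "\<bar>\<phi> g\<bar>" 0] by simp
qed

end

lemma bounded_Linf_functional_eqI:
  assumes "bounded_Linf_functional M J1 \<phi>" "bounded_Linf_functional M J2 \<psi>"
    and "\<And>E. E \<in> sets M \<Longrightarrow> \<phi> (indicator E) = \<psi> (indicator E)" and "g \<in> Linf M"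
  shows "\<phi> g = \<psi> g"
proof -
  interpret \<phi>: bounded_Linf_functional M J1 \<phi> by fact
  interpret \<psi>: bounded_Linf_functional M J2 \<psi> by fact
  interpret bounded_Linf_functional M "J1 + J2" "\<lambda>g. \<phi> g - \<psi> g"
  proof
    fix g1 g2 a b assume "g1 \<in> Linf M" "g2 \<in> Linf M"
    then show "\<phi> (\<lambda>x. a * g1 x + b * g2 x) - \<psi> (\<lambda>x. a * g1 x + b * g2 x) =
        a * (\<phi> g1 - \<psi> g1) + b * (\<phi> g2 - \<psi> g2)"
      by (simp add: \<phi>.linear \<psi>.linear algebra_simps)
  next
    fix g C assume "g \<in> Linf M" "AE x in M. \<bar>g x\<bar> \<le> C"
    then show "\<bar>\<phi> g - \<psi> g\<bar> \<le> C * (J1 + J2)"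
      using \<phi>.bounded \<psi>.bounded abs_triangle_ineq4[of "\<phi> g" "\<psi> g"]
      unfolding distrib_left by fastforce
  qed
  show ?thesis
    using eq_0_if_indicator_eq_0 assms(3,4) by simp
qed

definition Linf_pairing :: "'a measure \<Rightarrow> ('a \<Rightarrow> real) \<Rightarrow> ('a \<Rightarrow> real) \<Rightarrow> real" where
  "Linf_pairing M u = restrict (\<lambda>g. LINT x|M. u x * g x) (Linf M)"

lemma bounded_Linf_functional_Linf_pairing:
  fixes u :: "'a \<Rightarrow> real"
  assumes u: "integrable M u"
  shows "bounded_Linf_functional M (LINT x|M. \<bar>u x\<bar>) (Linf_pairing M u)"
proof
  fix g1 g2 a b assume g: "g1 \<in> Linf M" "g2 \<in> Linf M"
  have "(LINT x|M. u x * (a * g1 x + b * g2 x)) = (LINT x|M. a * (u x * g1 x) + b * (u x * g2 x))"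
    by (simp add: algebra_simps)
  also have "\<dots> = a * (LINT x|M. u x * g1 x) + b * (LINT x|M. u x * g2 x)"
    using integrable_mult_Linf[OF u g(1)] integrable_mult_Linf[OF u g(2)] by simp
  finally show "Linf_pairing M u (\<lambda>x. a * g1 x + b * g2 x) =
      a * Linf_pairing M u g1 + b * Linf_pairing M u g2"
    using g Linf_linear_combination[OF g] by (simp add: Linf_pairing_def)
next
  fix g C assume "g \<in> Linf M" "AE x in M. \<bar>g x\<bar> \<le> C"
  then show "\<bar>Linf_pairing M u g\<bar> \<le> C * (LINT x|M. \<bar>u x\<bar>)"
    using abs_integral_mult_Linf_le[OF u] by (simp add: Linf_pairing_def)
qed

definition tail_integral :: "'a measure \<Rightarrow> ('a \<Rightarrow> real) \<Rightarrow> real \<Rightarrow> real" where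
  "tail_integral M f N = (LINT x|M. f x * indicator {y \<in> space M. N < f y} x)"

lemma tendsto_tail_integral:
  fixes f :: "'a \<Rightarrow> real"
  assumes f: "integrable M f"
  shows "(\<lambda>n::nat. tail_integral M f n) \<longlonglongrightarrow> 0"
proof -
  have [measurable]: "f \<in> borel_measurable M"
    using f by auto
  have "(\<lambda>n::nat. LINT x|M. f x * indicator {y \<in> space M. n < f y} x) \<longlonglongrightarrow> (LINT x|M. 0)"
  proof (rule integral_dominated_convergence[where w="\<lambda>x. \<bar>f x\<bar>"])
    show "AE x in M. (\<lambda>n::nat. f x * indicator {y \<in> space M. n < f y} x) \<longlonglongrightarrow> 0"
    proof (rule AE_I2)
      fix x
      obtain n0 :: nat where "f x < n0"
        using reals_Archimedean2 by blast
      then have "\<forall>\<^sub>F n in sequentially. f x * indicator {y \<in> space M. n < f y} x = 0"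
        unfolding eventually_sequentially
        by (intro exI[of _ n0]) (auto simp: indicator_def)
      then show "(\<lambda>n::nat. f x * indicator {y \<in> space M. n < f y} x) \<longlonglongrightarrow> 0"
        by (rule tendsto_eventually)
    qed
  qed (use f in \<open>auto simp: indicator_def\<close>)
  then show ?thesis
    by (simp add: tail_integral_def)
qed

lemma tendsto_0_if_dominated:
  fixes x t m :: "nat \<Rightarrow> real"
  assumes t: "t \<longlonglongrightarrow> 0" and m: "m \<longlonglongrightarrow> 0"
    and nonneg: "\<And>i. 0 \<le> x i" and dominated: "\<And>n i. x i \<le> t n + n * m i"
  shows "x \<longlonglongrightarrow> 0"
proof (rule order_tendstoI)
  fix a :: real assume "a < 0"
  then show "\<forall>\<^sub>F i in sequentially. a < x i"
    using nonneg by (intro always_eventually allI) (meson order.strict_trans2)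
next
  fix r :: real assume r: "0 < r"
  obtain n where n: "t n < r / 2"
    using order_tendstoD(2)[OF t, of "r / 2"] r by (auto simp: eventually_sequentially)
  have "\<forall>\<^sub>F i in sequentially. m i < r / (2 * (n + 1))"
    using order_tendstoD(2)[OF m] r by simp
  then show "\<forall>\<^sub>F i in sequentially. x i < r"
  proof eventually_elim
    case (elim i)
    have "n * m i \<le> n * (r / (2 * (n + 1)))"
      using elim by (intro mult_left_mono) auto
    also have "\<dots> \<le> r / 2"
      using r by (simp add: field_simps)
    finally show ?case
      using dominated[of i n] n by linarith
  qed
qed

lemma (in sigma_finite_measure) integrable_density_of_absolutely_continuous:
  assumes N: "finite_measure N" and ac: "absolutely_continuous M N" "sets N = sets M"
  obtains u where "integrable M u" "\<And>E. E \<in> sets M \<Longrightarrow> measure N E = (LINT x|M. u x * indicator E x)"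
proof
  interpret N: finite_measure N by fact
  have sN: "sigma_finite_measure N"
    by unfold_locales
  show "integrable M (\<lambda>x. enn2real (RN_deriv M N x))"
    using RN_deriv_integrable[OF sN ac, of "\<lambda>_. 1"] by simp
  fix E assume "E \<in> sets M"
  then show "measure N E = (LINT x|M. enn2real (RN_deriv M N x) * indicator E x)"
    using RN_deriv_integral[OF sN ac, of "indicator E"] ac(2) sets.Int_space_eq2 by simp
qed

lemma (in finite_measure) countably_additive_if_dominated:
  fixes \<nu> :: "'a set \<Rightarrow> real" and t :: "nat \<Rightarrow> real"
  assumes t: "t \<longlonglongrightarrow> 0"
    and nonneg: "\<And>E. E \<in> sets M \<Longrightarrow> 0 \<le> \<nu> E"
    and dominated: "\<And>E n. E \<in> sets M \<Longrightarrow> \<nu> E \<le> t n + n * measure M E"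
    and additive: "\<And>A B. A \<in> sets M \<Longrightarrow> B \<in> sets M \<Longrightarrow> A \<inter> B = {} \<Longrightarrow> \<nu> (A \<union> B) = \<nu> A + \<nu> B"
  shows "positive (sets M) (\<lambda>E. ennreal (\<nu> E))" "countably_additive (sets M) (\<lambda>E. ennreal (\<nu> E))"
proof -
  have "\<nu> {} = 0"
    using additive[of "{}" "{}"] by simp
  then show pos: "positive (sets M) (\<lambda>E. ennreal (\<nu> E))"
    by (simp add: positive_def)
  have "(\<lambda>i. ennreal (\<nu> (A i))) \<longlonglongrightarrow> 0"
    if "range A \<subseteq> sets M" "decseq A" "(\<Inter>i. A i) = {}" for A
  proof -
    have "(\<lambda>i. measure M (A i)) \<longlonglongrightarrow> 0"
      using finite_Lim_measure_decseq[OF that(1,2)] that(3) by simp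
    then have "(\<lambda>i. \<nu> (A i)) \<longlonglongrightarrow> 0"
      using that(1) by (intro tendsto_0_if_dominated[OF t _ nonneg dominated]) auto
    then show ?thesis
      using tendsto_ennrealI by fastforce
  qed
  moreover have "additive (sets M) (\<lambda>E. ennreal (\<nu> E))"
    using additive nonneg by (simp add: Measure_Space.additive_def ennreal_plus)
  ultimately show "countably_additive (sets M) (\<lambda>E. ennreal (\<nu> E))"
    using pos by (intro sets.empty_continuous_imp_countably_additive) auto
qed

lemma (in finite_measure) integrable_density_of_dominated_additive:
  fixes \<nu> :: "'a set \<Rightarrow> real" and t :: "nat \<Rightarrow> real"
  assumes t: "t \<longlonglongrightarrow> 0"
    and nonneg: "\<And>E. E \<in> sets M \<Longrightarrow> 0 \<le> \<nu> E"
    and dominated: "\<And>E n. E \<in> sets M \<Longrightarrow> \<nu> E \<le> t n + n * measure M E"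
    and additive: "\<And>A B. A \<in> sets M \<Longrightarrow> B \<in> sets M \<Longrightarrow> A \<inter> B = {} \<Longrightarrow> \<nu> (A \<union> B) = \<nu> A + \<nu> B"
  obtains u where "integrable M u" "\<And>E. E \<in> sets M \<Longrightarrow> \<nu> E = (LINT x|M. u x * indicator E x)"
proof -
  note ca = countably_additive_if_dominated[OF assms]
  define N where "N = measure_of (space M) (sets M) (\<lambda>E. ennreal (\<nu> E))"
  have sN: "sets N = sets M"
    by (simp add: N_def)
  have eN: "emeasure N E = \<nu> E" if "E \<in> sets M" for E
    unfolding N_def using emeasure_measure_of_sigma[OF sets.sigma_algebra_axioms ca that] .
  have "finite_measure N"
    using eN[of "space M"] by (intro finite_measureI) (simp add: N_def)
  moreover have "absolutely_continuous M N"
    unfolding absolutely_continuous_def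
  proof
    fix E assume E: "E \<in> null_sets M"
    have "\<nu> E \<le> 0"
      using E dominated[of E] by (intro LIMSEQ_le_const[OF t]) (auto simp: null_sets_def measure_def)
    then show "E \<in> null_sets N"
      using E eN nonneg[of E] sN by (auto simp: null_sets_def)
  qed
  ultimately obtain u where "integrable M u" "\<And>E. E \<in> sets M \<Longrightarrow> measure N E = (LINT x|M. u x * indicator E x)"
    using integrable_density_of_absolutely_continuous sN by blast
  then show ?thesis
    using that eN nonneg by (simp add: measure_def)
qed

lemma integrable_Linf:
  assumes "finite_measure M" "g \<in> Linf M"
  shows "integrable M g"
  using integrable_mult_Linf[OF finite_measure.integrable_const[OF assms(1), of 1] assms(2)] by simp

lemma semi_doubly_stochasticD:
  assumes "semi_doubly_stochastic M T" "integrable M f"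
  shows "integrable M (T f)"
    and "(LINT x|M. T f x) = (LINT x|M. f x)"
    and "(AE x in M. 0 \<le> f x) \<Longrightarrow> AE x in M. 0 \<le> T f x"
    and "integrable M g \<Longrightarrow> AE x in M. T (\<lambda>y. a * f y + b * g y) x = a * T f x + b * T g x"
  using assms by (auto simp: semi_doubly_stochastic_def)

lemma semi_doubly_stochastic_adjoint_indicator:
  assumes "finite_measure M" "semi_doubly_stochastic M T" "E \<in> sets M"
  obtains h where "is_adjoint_image M T (indicator E) h" "(LINT x|M. h x) \<le> measure M E"
  using assms finite_measure.emeasure_finite[OF assms(1), of E]
  by (auto simp: semi_doubly_stochastic_def top.not_eq_extremum)

lemma adjoint_image_nonneg:
  assumes fm: "finite_measure M" and T: "semi_doubly_stochastic M T"
    and h: "is_adjoint_image M T g h" and g: "AE x in M. 0 \<le> g x"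
  shows "AE x in M. 0 \<le> h x"
proof -
  have hL: "h \<in> Linf M"
    and adj: "\<And>f. integrable M f \<Longrightarrow> (LINT x|M. f x * h x) = (LINT x|M. T f x * g x)"
    using h by (auto simp: is_adjoint_image_def)
  define A where "A = {x \<in> space M. h x < 0}"
  have [measurable]: "h \<in> borel_measurable M"
    using hL by (simp add: Linf_def)
  have "A \<in> sets M"
    unfolding A_def by measurable
  then have A: "integrable M (indicator A :: 'a \<Rightarrow> real)"
    using integrable_Linf[OF fm Linf_indicator] by blast
  have "0 \<le> (LINT x|M. T (indicator A) x * g x)"
    using semi_doubly_stochasticD(3)[OF T A] g
    by (intro integral_nonneg_AE) (auto elim!: eventually_elim2 simp: indicator_def)
  also have "\<dots> = (LINT x|M. indicator A x * h x)"
    using adj[OF A] by simp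
  finally have "(LINT x|M. indicator A x * - h x) \<le> 0"
    by simp
  moreover have "0 \<le> (LINT x|M. indicator A x * - h x)"
    by (intro integral_nonneg_AE) (auto simp: A_def indicator_def)
  ultimately have "(LINT x|M. indicator A x * - h x) = 0"
    by linarith
  then have "AE x in M. indicator A x * - h x = 0"
    using integrable_mult_Linf[OF A hL]
    by (subst (asm) integral_nonneg_eq_0_iff_AE) (auto simp: A_def indicator_def)
  then show ?thesis
    using AE_space by eventually_elim (auto simp: A_def indicator_def split: if_splits)
qed

lemma semi_doubly_stochastic_integral_indicator_le_integral:
  assumes T: "semi_doubly_stochastic M T"
    and f: "integrable M f" "AE x in M. 0 \<le> f x" and E: "E \<in> sets M"
  shows "(LINT x|M. T f x * indicator E x) \<le> (LINT x|M. f x)"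
proof -
  have Tf: "integrable M (T f)" and "AE x in M. 0 \<le> T f x"
    using semi_doubly_stochasticD(1,3)[OF T f(1)] f(2) by auto
  then have "(LINT x|M. T f x * indicator E x) \<le> (LINT x|M. T f x)"
    using integrable_mult_Linf[OF Tf Linf_indicator[OF E]]
    by (intro integral_mono_AE) (auto elim!: eventually_mono simp: indicator_def)
  then show ?thesis
    using semi_doubly_stochasticD(2)[OF T f(1)] by simp
qed

lemma semi_doubly_stochastic_integral_indicator_le_bound:
  assumes fm: "finite_measure M" and T: "semi_doubly_stochastic M T"
    and f: "integrable M f" "AE x in M. f x \<le> N" and N: "0 \<le> N" and E: "E \<in> sets M"
  shows "(LINT x|M. T f x * indicator E x) \<le> N * measure M E"
proof -
  obtain h where h: "is_adjoint_image M T (indicator E) h" and h_le: "(LINT x|M. h x) \<le> measure M E"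
    using semi_doubly_stochastic_adjoint_indicator[OF fm T E] by blast
  have hL: "h \<in> Linf M"
    using h by (simp add: is_adjoint_image_def)
  have "AE x in M. 0 \<le> h x"
    using adjoint_image_nonneg[OF fm T h] by (simp add: indicator_def)
  then have "AE x in M. f x * h x \<le> N * h x"
    using f(2) by eventually_elim (simp add: mult_right_mono)
  then have "(LINT x|M. f x * h x) \<le> (LINT x|M. N * h x)"
    using integrable_mult_Linf[OF f(1) hL] integrable_Linf[OF fm hL] by (intro integral_mono_AE) auto
  also have "\<dots> \<le> N * measure M E"
    using h_le N by (simp add: mult_left_mono)
  finally show ?thesis
    using h f(1) by (simp add: is_adjoint_image_def)
qed

lemma semi_doubly_stochastic_integral_indicator_le:
  assumes fm: "finite_measure M" and T: "semi_doubly_stochastic M T"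
    and f: "integrable M f" "AE x in M. 0 \<le> f x"
    and E: "E \<in> sets M" and N: "0 \<le> N"
  shows "(LINT x|M. T f x * indicator E x) \<le> tail_integral M f N + N * measure M E"
proof -
  have [measurable]: "f \<in> borel_measurable M"
    using f by auto
  have E': "indicator E \<in> Linf M"
    using E by (rule Linf_indicator)
  define f1 where "f1 x = f x * indicator {y \<in> space M. N < f y} x" for x
  define f2 where "f2 x = f x - f1 x" for x
  have f1: "integrable M f1"
    unfolding f1_def using f(1) by (intro integrable_real_mult_indicator) auto
  have f2: "integrable M f2"
    unfolding f2_def using f(1) f1 by auto
  have Tf1: "integrable M (T f1)" and Tf2: "integrable M (T f2)"
    using semi_doubly_stochasticD(1)[OF T] f1 f2 by auto
  have "AE x in M. T f x = 1 * T f1 x + 1 * T f2 x"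
    using semi_doubly_stochasticD(4)[OF T f1 f2, of 1 1] by (simp add: f2_def)
  then have "(LINT x|M. T f x * indicator E x) =
      (LINT x|M. T f1 x * indicator E x + T f2 x * indicator E x)"
    using integrable_mult_Linf[OF semi_doubly_stochasticD(1)[OF T f(1)] E']
      integrable_mult_Linf[OF Tf1 E'] integrable_mult_Linf[OF Tf2 E']
    by (intro integral_cong_AE) (auto elim!: eventually_mono simp: algebra_simps)
  also have "\<dots> = (LINT x|M. T f1 x * indicator E x) + (LINT x|M. T f2 x * indicator E x)"
    using integrable_mult_Linf[OF Tf1 E'] integrable_mult_Linf[OF Tf2 E'] by simp
  also have "(LINT x|M. T f1 x * indicator E x) \<le> tail_integral M f N"
  proof -
    have "AE x in M. 0 \<le> f1 x"
      using f(2) by eventually_elim (simp add: f1_def indicator_def)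
    then show ?thesis
      using semi_doubly_stochastic_integral_indicator_le_integral[OF T f1 _ E]
      by (simp add: tail_integral_def f1_def)
  qed
  also have "(LINT x|M. T f2 x * indicator E x) \<le> N * measure M E"
    using semi_doubly_stochastic_integral_indicator_le_bound[OF fm T f2 _ N E] AE_space
    by (auto elim!: eventually_mono simp: f2_def f1_def indicator_def N)
  finally show ?thesis
    by simp
qed

lemma compactin_pullback_topology:
  assumes B: "B \<subseteq> A" and K: "compactin Y (P ` B)"
  shows "compactin (pullback_topology A P Y) B"
  unfolding compactin_def
proof (intro conjI allI impI)
  show "B \<subseteq> topspace (pullback_topology A P Y)"
    using B compactin_subset_topspace[OF K] by (auto simp: topspace_pullback_topology)
  fix \<U> assume \<U>: "(\<forall>U\<in>\<U>. openin (pullback_topology A P Y) U) \<and> B \<subseteq> \<Union>\<U>"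
  then obtain W where W: "\<And>U. U \<in> \<U> \<Longrightarrow> openin Y (W U) \<and> U = P -` W U \<inter> A"
    unfolding openin_pullback_topology by metis
  have "(\<forall>V\<in>W ` \<U>. openin Y V) \<and> P ` B \<subseteq> \<Union>(W ` \<U>)"
  proof (intro conjI ballI subsetI)
    fix y assume "y \<in> P ` B"
    then obtain x U where "x \<in> B" "y = P x" "U \<in> \<U>" "x \<in> U"
      using \<U> by blast
    then show "y \<in> \<Union>(W ` \<U>)"
      using W[of U] by blast
  qed (use W in blast)
  then obtain \<G> where "finite \<G>" "\<G> \<subseteq> W ` \<U>" "P ` B \<subseteq> \<Union>\<G>"
    using K unfolding compactin_def by meson
  then obtain \<F> where \<F>: "\<F> \<subseteq> \<U>" "finite \<F>" "P ` B \<subseteq> \<Union>(W ` \<F>)"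
    by (metis finite_subset_image)
  have "B \<subseteq> \<Union>\<F>"
  proof
    fix x assume "x \<in> B"
    then obtain U where "U \<in> \<F>" "P x \<in> W U"
      using \<F>(3) by blast
    then show "x \<in> \<Union>\<F>"
      using W[of U] \<F>(1) B \<open>x \<in> B\<close> by blast
  qed
  then show "\<exists>\<F>. finite \<F> \<and> \<F> \<subseteq> \<U> \<and> B \<subseteq> \<Union>\<F>"
    using \<F> by blast
qed

lemma relatively_compactin_pullback_topology:
  assumes "compactin Y K" "closedin Y K" "P ` S \<subseteq> K" "K \<subseteq> P ` A" "S \<subseteq> A"
  shows "relatively_compactin (pullback_topology A P Y) S"
proof -
  let ?X = "pullback_topology A P Y"
  define C where "C = P -` K \<inter> A"
  have "continuous_map ?X Y P"
    using continuous_map_pullback[OF continuous_map_id, of A P] by (simp add: o_def)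
  then have "closedin ?X {x \<in> topspace ?X. P x \<in> K}"
    using assms(2) by (rule closedin_continuous_map_preimage)
  moreover have "{x \<in> topspace ?X. P x \<in> K} = C"
    using closedin_subset[OF assms(2)] by (auto simp: C_def topspace_pullback_topology)
  ultimately have "closedin ?X C"
    by simp
  moreover have "P ` C = K"
    using assms(4) by (auto simp: C_def)
  then have "compactin ?X C"
    using assms(1) by (intro compactin_pullback_topology) (auto simp: C_def)
  moreover have "S \<subseteq> C"
    using assms(3,5) by (auto simp: C_def)
  ultimately have "compactin ?X (?X closure_of S)"
    by (meson closed_compactin closedin_closure_of closure_of_minimal)
  moreover have "S \<subseteq> topspace ?X"
    using assms(3,5) closedin_subset[OF assms(2)] unfolding topspace_pullback_topology by blast
  ultimately show ?thesis
    unfolding relatively_compactin_def by simp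
qed

lemma closedin_Collect_all:
  assumes "\<And>i. closedin Y {x \<in> topspace Y. Q i x}"
  shows "closedin Y {x \<in> topspace Y. \<forall>i. Q i x}"
proof -
  have "{x \<in> topspace Y. \<forall>i. Q i x} = \<Inter>(range (\<lambda>i. {x \<in> topspace Y. Q i x}))"
    by auto
  then show ?thesis
    using assms by (auto intro!: closedin_Inter)
qed

lemma closedin_Collect_imp:
  assumes "R \<Longrightarrow> closedin Y {x \<in> topspace Y. Q x}"
  shows "closedin Y {x \<in> topspace Y. R \<longrightarrow> Q x}"
  using assms by (cases R) auto

lemma closedin_Collect_conj:
  assumes "closedin Y {x \<in> topspace Y. P x}" "closedin Y {x \<in> topspace Y. Q x}"
  shows "closedin Y {x \<in> topspace Y. P x \<and> Q x}"
proof -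
  have "{x \<in> topspace Y. P x \<and> Q x} = {x \<in> topspace Y. P x} \<inter> {x \<in> topspace Y. Q x}"
    by auto
  then show ?thesis
    using assms by auto
qed

lemma closedin_Collect_le:
  assumes "continuous_map Y euclideanreal h1" "continuous_map Y euclideanreal h2"
  shows "closedin Y {x \<in> topspace Y. h1 x \<le> h2 x}"
  using closedin_continuous_map_preimage[OF continuous_map_diff[OF assms(2,1)], of "{0..}"]
  by simp

lemma closedin_Collect_eq:
  assumes "continuous_map Y euclideanreal h1" "continuous_map Y euclideanreal h2"
  shows "closedin Y {x \<in> topspace Y. h1 x = h2 x}"
  using closedin_Collect_conj[OF closedin_Collect_le[OF assms] closedin_Collect_le[OF assms(2,1)]]
  by (simp add: order_eq_iff)

abbreviation pointwise_Linf_topology :: "'a measure \<Rightarrow> (('a \<Rightarrow> real) \<Rightarrow> real) topology" where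
  "pointwise_Linf_topology M \<equiv> product_topology (\<lambda>_. euclideanreal) (Linf M)"

lemma topspace_pointwise_Linf_topology:
  "topspace (pointwise_Linf_topology M) = Pi\<^sub>E (Linf M) (\<lambda>_. UNIV)"
  by (simp add: topspace_product_topology)

lemma closedin_bounded_Linf_functionals:
  "closedin (pointwise_Linf_topology M)
     {\<phi> \<in> topspace (pointwise_Linf_topology M). bounded_Linf_functional M J \<phi>}"
  unfolding bounded_Linf_functional_def
  by (intro closedin_Collect_conj closedin_Collect_all closedin_Collect_imp closedin_Collect_eq
      closedin_Collect_le)
    (auto intro!: continuous_intros continuous_map_product_projection Linf_linear_combination)

lemma compactin_bounded_Linf_functionals:
  "compactin (pointwise_Linf_topology M)
     {\<phi> \<in> topspace (pointwise_Linf_topology M). bounded_Linf_functional M J \<phi>}"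
proof (rule closed_compactin[OF _ _ closedin_bounded_Linf_functionals])
  define c where "c g = (SOME C. AE x in M. \<bar>g x\<bar> \<le> C) * J" for g
  show "compactin (pointwise_Linf_topology M) (Pi\<^sub>E (Linf M) (\<lambda>g. {-c g..c g}))"
    by (simp add: compactin_PiE)
  have "\<phi> g \<in> {-c g..c g}" if \<phi>: "bounded_Linf_functional M J \<phi>" and g: "g \<in> Linf M" for \<phi> g
  proof -
    obtain C where "AE x in M. \<bar>g x\<bar> \<le> C"
      using g by (auto simp: Linf_def)
    then have "AE x in M. \<bar>g x\<bar> \<le> (SOME C. AE x in M. \<bar>g x\<bar> \<le> C)"
      by (rule someI)
    then have "\<bar>\<phi> g\<bar> \<le> c g"
      unfolding c_def using bounded_Linf_functional.bounded[OF \<phi> g] by blast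
    then show ?thesis
      by (simp add: abs_le_iff)
  qed
  then show "{\<phi> \<in> topspace (pointwise_Linf_topology M). bounded_Linf_functional M J \<phi>}
      \<subseteq> Pi\<^sub>E (Linf M) (\<lambda>g. {-c g..c g})"
    by (auto simp: topspace_pointwise_Linf_topology PiE_iff extensional_def)
qed

text \<open>Uniform integrability enters through the tail bound for every n rather than as an
\<epsilon>-\<delta> condition, because only the former is closed in the pointwise topology.\<close>

definition dominated_Linf_functionals ::
  "'a measure \<Rightarrow> ('a \<Rightarrow> real) \<Rightarrow> (('a \<Rightarrow> real) \<Rightarrow> real) set" where
  "dominated_Linf_functionals M f =
     {\<phi> \<in> Pi\<^sub>E (Linf M) (\<lambda>_. UNIV). bounded_Linf_functional M (LINT x|M. f x) \<phi> \<and>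
        (\<forall>E \<in> sets M. 0 \<le> \<phi> (indicator E) \<and>
           (\<forall>n::nat. \<phi> (indicator E) \<le> tail_integral M f n + n * measure M E))}"

lemma closedin_dominated_Linf_functionals:
  "closedin (pointwise_Linf_topology M) (dominated_Linf_functionals M f)"
  unfolding dominated_Linf_functionals_def topspace_pointwise_Linf_topology[symmetric] Ball_def
  by (intro closedin_Collect_conj closedin_bounded_Linf_functionals closedin_Collect_all
      closedin_Collect_imp closedin_Collect_le)
    (auto intro!: continuous_intros continuous_map_product_projection Linf_indicator)

lemma compactin_dominated_Linf_functionals:
  "compactin (pointwise_Linf_topology M) (dominated_Linf_functionals M f)"
  by (rule closed_compactin[OF compactin_bounded_Linf_functionals _ closedin_dominated_Linf_functionals])
    (auto simp: dominated_Linf_functionals_def topspace_pointwise_Linf_topology)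

lemma Linf_pairing_in_dominated_Linf_functionals:
  assumes fm: "finite_measure M" and f: "integrable M f" "AE x in M. 0 \<le> f x"
    and T: "semi_doubly_stochastic M T"
  shows "Linf_pairing M (T f) \<in> dominated_Linf_functionals M f"
proof -
  have Tf: "integrable M (T f)" and Tf_nonneg: "AE x in M. 0 \<le> T f x"
    using semi_doubly_stochasticD(1,3)[OF T f(1)] f(2) by auto
  have "(LINT x|M. \<bar>T f x\<bar>) = (LINT x|M. T f x)"
    using Tf Tf_nonneg by (intro integral_cong_AE) (auto elim!: eventually_mono)
  then have "bounded_Linf_functional M (LINT x|M. f x) (Linf_pairing M (T f))"
    using bounded_Linf_functional_Linf_pairing[OF Tf] semi_doubly_stochasticD(2)[OF T f(1)] by simp
  moreover have "0 \<le> Linf_pairing M (T f) (indicator E)" if "E \<in> sets M" for E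
    using that Tf_nonneg
    by (auto simp: Linf_pairing_def Linf_indicator indicator_def elim!: eventually_mono
        intro!: integral_nonneg_AE)
  moreover have "Linf_pairing M (T f) (indicator E) \<le> tail_integral M f n + n * measure M E"
    if "E \<in> sets M" for E and n :: nat
    using semi_doubly_stochastic_integral_indicator_le[OF fm T f that, of n] that
    by (simp add: Linf_pairing_def Linf_indicator)
  ultimately show ?thesis
    by (simp add: dominated_Linf_functionals_def Linf_pairing_def)
qed

lemma dominated_Linf_functional_eq_Linf_pairing:
  assumes fm: "finite_measure M" and f: "integrable M f"
    and \<phi>: "\<phi> \<in> dominated_Linf_functionals M f"
  obtains u where "integrable M u" "\<phi> = Linf_pairing M u"
proof -
  interpret finite_measure M by fact
  interpret \<phi>: bounded_Linf_functional M "LINT x|M. f x" \<phi>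
    using \<phi> by (simp add: dominated_Linf_functionals_def)
  have ext: "\<phi> \<in> extensional (Linf M)"
    using \<phi> by (simp add: dominated_Linf_functionals_def PiE_def)
  have additive: "\<phi> (indicator (A \<union> B)) = \<phi> (indicator A) + \<phi> (indicator B)"
    if "A \<in> sets M" "B \<in> sets M" "A \<inter> B = {}" for A B
  proof -
    have "indicator (A \<union> B) = (\<lambda>x. 1 * indicator A x + 1 * indicator B x :: real)"
      using that(3) by (auto simp: fun_eq_iff indicator_def)
    then show ?thesis
      using \<phi>.linear[OF Linf_indicator Linf_indicator, OF that(1,2), of 1 1] by simp
  qed
  obtain u where u: "integrable M u"
    and u_ind: "\<And>E. E \<in> sets M \<Longrightarrow> \<phi> (indicator E) = (LINT x|M. u x * indicator E x)"
    using integrable_density_of_dominated_additive[OF tendsto_tail_integral[OF f], of "\<lambda>E. \<phi> (indicator E)"]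
      \<phi> additive by (auto simp: dominated_Linf_functionals_def)
  have "\<phi> g = Linf_pairing M u g" if "g \<in> Linf M" for g
    using bounded_Linf_functional_eqI[OF \<phi>.bounded_Linf_functional_axioms
        bounded_Linf_functional_Linf_pairing[OF u] _ that]
    by (simp add: u_ind Linf_pairing_def Linf_indicator)
  then have "\<phi> = Linf_pairing M u"
    using ext by (intro extensionalityI[OF ext]) (auto simp: Linf_pairing_def)
  then show ?thesis
    using that u by blast
qed

theorem corollary3p10:
  fixes M :: "'a measure" and f :: "'a \<Rightarrow> real"
  assumes "finite_measure M"
    and "integrable M f"
    and "AE x in M. 0 \<le> f x"
  shows "relatively_compactin (weak_L1_topology M)
           {T f | T. semi_doubly_stochastic M T}"
proof -
  have "weak_L1_topology M =
      pullback_topology {u. integrable M u} (Linf_pairing M) (pointwise_Linf_topology M)"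
    by (simp add: weak_L1_topology_def Linf_pairing_def[abs_def])
  moreover have "relatively_compactin
      (pullback_topology {u. integrable M u} (Linf_pairing M) (pointwise_Linf_topology M))
      {T f | T. semi_doubly_stochastic M T}"
  proof (rule relatively_compactin_pullback_topology)
    show "compactin (pointwise_Linf_topology M) (dominated_Linf_functionals M f)"
      by (rule compactin_dominated_Linf_functionals)
    show "closedin (pointwise_Linf_topology M) (dominated_Linf_functionals M f)"
      by (rule closedin_dominated_Linf_functionals)
    show "Linf_pairing M ` {T f | T. semi_doubly_stochastic M T} \<subseteq> dominated_Linf_functionals M f"
      using Linf_pairing_in_dominated_Linf_functionals[OF assms] by blast
    show "dominated_Linf_functionals M f \<subseteq> Linf_pairing M ` {u. integrable M u}"
      using dominated_Linf_functional_eq_Linf_pairing[OF assms(1,2)] by blast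
    show "{T f | T. semi_doubly_stochastic M T} \<subseteq> {u. integrable M u}"
      using semi_doubly_stochasticD(1)[OF _ assms(2)] by blast
  qed
  ultimately show ?thesis
    by simp
qed

end
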